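(* Let $E$ be a countable directed graph which is row-finite and has no sources, let $G$ be a discrete group acting on $E$ by graph automorphisms, and let $\varphi:G\times E^1\to G$ be a 1-cocycle with $\varphi(g,a)\cdot x=g\cdot x$ for all $g,a,x$. Then every tight filter in the semilattice of idempotents $E(\mathcal{S}_{G,E})$ is an ultrafilter; that is, the tight spectrum $\widehat E_{\mathrm{tight}}(\mathcal{S}_{G,E})$ coincides with the space $\widehat E_\infty(\mathcal{S}_{G,E})$ of ultrafilters (which is homeomorphic to $E^\infty$ via $\omega\mapsto\{(\omega|_n,1,\omega|_n):n\in\mathbb{N}\}$).
   Context: Conventions: paths $\alpha=\alpha_1\cdots\alpha_n$ with $s(\alpha_i)=r(\alpha_{i+1})$, $r(\alpha)=r(\alpha_1)$, $s(\alpha)=s(\alpha_n)$; vertices are paths of length 0; $E^*$ finite paths, $E^\infty$ infinite paths $\omega=\omega_1\omega_2\cdots$, $\omega|_n=\omega_1\cdots\omega_n$. Row-finite without sources: $0<|r^{-1}(x)|<\infty$ for every vertex $x$. 1-cocycle: $\varphi(gh,a)=\varphi(g,ha)\varphi(h,a)$; action and cocycle extend to paths by $g(a\alpha')=(ga)(\varphi(g,a)\alpha')$, $\varphi(g,a\alpha')=\varphi(\varphi(g,a),\alpha')$, $\varphi(g,x)=g$ for vertices. $\mathcal{S}_{G,E}=\{(\alpha,g,\beta):\alpha,\beta\in E^*,\ g\in G,\ s(\alpha)=g\,s(\beta)\}\cup\{0\}$, with $(\alpha,g,\beta)(\gamma,h,\delta)$ equal to $(\alpha,g\varphi(h,\varepsilon),\delta(h^{-1}\varepsilon))$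 if $\beta=\gamma\varepsilon$, to $(\alpha(g\varepsilon),\varphi(g,\varepsilon)h,\delta)$ if $\gamma=\beta\varepsilon$, and $0$ otherwise; $(\alpha,g,\beta)^*=(\beta,g^{-1},\alpha)$. Its nonzero idempotents are $(\alpha,1,\alpha)$, $\alpha\in E^*$, with $(\alpha,1,\alpha)\le(\beta,1,\beta)$ iff $\beta$ is a prefix of $\alpha$. A filter is a nonempty subset $\xi\subseteq E(\mathcal{S}_{G,E})$ not containing $0$, closed under products and upward closed; an ultrafilter is a maximal filter. For finite $X,Y\subseteq E(S)$, $E(S)^{X,Y}=\{e: e\le x\ \forall x\in X,\ ey=0\ \forall y\in Y\}$; a finite $Z\subseteq E(S)^{X,Y}$ is a cover if every nonzero element of $E(S)^{X,Y}$ has nonzero product with some $z\in Z$. A filter $\xi$ is tight if whenever $X,Y$ are finite with $X\subseteq\xi$ and $Y\cap\xi=\emptyset$, every finite cover $Z$ of $E(S)^{X,Y}$ satisfies $Z\cap\xi\ne\emptyset$. *)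

theory Defs
  imports "HOL-Algebra.Group" "HOL-Library.Countable_Set" "HOL-Library.Sublist"
begin

text \<open>A finite path is represented as a pair (v, l): v is its range vertex r(alpha)
  and l = [alpha_1, ..., alpha_n] its list of edges; a vertex x is the path (x, []).\<close>

type_synonym ('v,'e) fpath = "'v \<times> 'e list"

fun composable :: "('e \<Rightarrow> 'v) \<Rightarrow> ('e \<Rightarrow> 'v) \<Rightarrow> 'e list \<Rightarrow> bool" where
  "composable r s [] = True"
| "composable r s [a] = True"
| "composable r s (a # b # l) = (s a = r b \<and> composable r s (b # l))"

definition is_path :: "('e \<Rightarrow> 'v) \<Rightarrow> ('e \<Rightarrow> 'v) \<Rightarrow> ('v,'e) fpath \<Rightarrow> bool" where
  "is_path r s \<alpha> \<longleftrightarrow> composable r s (snd \<alpha>) \<and> (snd \<alpha> \<noteq> [] \<longrightarrow> r (hd (snd \<alpha>)) = fst \<alpha>)"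

definition src_path :: "('e \<Rightarrow> 'v) \<Rightarrow> ('v,'e) fpath \<Rightarrow> 'v" where
  "src_path s \<alpha> = (if snd \<alpha> = [] then fst \<alpha> else s (last (snd \<alpha>)))"

fun act_edges :: "('g \<Rightarrow> 'e \<Rightarrow> 'e) \<Rightarrow> ('g \<Rightarrow> 'e \<Rightarrow> 'g) \<Rightarrow> 'g \<Rightarrow> 'e list \<Rightarrow> 'e list" where
  "act_edges aE \<phi> g [] = []"
| "act_edges aE \<phi> g (a # l) = aE g a # act_edges aE \<phi> (\<phi> g a) l"

fun cocycle_edges :: "('g \<Rightarrow> 'e \<Rightarrow> 'g) \<Rightarrow> 'g \<Rightarrow> 'e list \<Rightarrow> 'g" where
  "cocycle_edges \<phi> g [] = g"
| "cocycle_edges \<phi> g (a # l) = cocycle_edges \<phi> (\<phi> g a) l"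

datatype ('v,'e,'g) sge = SZero | STr "('v,'e) fpath" 'g "('v,'e) fpath"

definition S_GE :: "'g monoid \<Rightarrow> ('e \<Rightarrow> 'v) \<Rightarrow> ('e \<Rightarrow> 'v) \<Rightarrow> ('g \<Rightarrow> 'v \<Rightarrow> 'v)
    \<Rightarrow> ('v,'e,'g) sge set" where
  "S_GE G r s aV = {SZero} \<union>
     {STr \<alpha> g \<beta> | \<alpha> g \<beta>. is_path r s \<alpha> \<and> is_path r s \<beta> \<and> g \<in> carrier G
        \<and> src_path s \<alpha> = aV g (src_path s \<beta>)}"

text \<open>(alpha,g,beta)(gamma,h,delta) =
   (alpha, g phi(h,eps), delta (h^-1 eps))  if beta = gamma eps,
   (alpha (g eps), phi(g,eps) h, delta)     if gamma = beta eps,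
   0 otherwise.\<close>

definition S_mult :: "'g monoid \<Rightarrow> ('g \<Rightarrow> 'e \<Rightarrow> 'e) \<Rightarrow> ('g \<Rightarrow> 'e \<Rightarrow> 'g)
    \<Rightarrow> ('v,'e,'g) sge \<Rightarrow> ('v,'e,'g) sge \<Rightarrow> ('v,'e,'g) sge" where
  "S_mult G aE \<phi> x y =
    (case x of SZero \<Rightarrow> SZero
     | STr \<alpha> g \<beta> \<Rightarrow>
       (case y of SZero \<Rightarrow> SZero
        | STr \<gamma> h \<delta> \<Rightarrow>
          (if fst \<beta> = fst \<gamma> \<and> prefix (snd \<gamma>) (snd \<beta>) then
             (let \<epsilon> = drop (length (snd \<gamma>)) (snd \<beta>) in
               STr \<alpha> (g \<otimes>\<^bsub>G\<^esub> cocycle_edges \<phi> h \<epsilon>)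
                   (fst \<delta>, snd \<delta> @ act_edges aE \<phi> (inv\<^bsub>G\<^esub> h) \<epsilon>))
           else if fst \<beta> = fst \<gamma> \<and> prefix (snd \<beta>) (snd \<gamma>) then
             (let \<epsilon> = drop (length (snd \<beta>)) (snd \<gamma>) in
               STr (fst \<alpha>, snd \<alpha> @ act_edges aE \<phi> g \<epsilon>)
                   (cocycle_edges \<phi> g \<epsilon> \<otimes>\<^bsub>G\<^esub> h) \<delta>)
           else SZero)))"

definition idempotents :: "'a set \<Rightarrow> ('a \<Rightarrow> 'a \<Rightarrow> 'a) \<Rightarrow> 'a set" where
  "idempotents S m = {e \<in> S. m e e = e}"

definition sl_le :: "('a \<Rightarrow> 'a \<Rightarrow> 'a) \<Rightarrow> 'a \<Rightarrow> 'a \<Rightarrow> bool" where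
  "sl_le m e f \<longleftrightarrow> m e f = e"

definition is_filter :: "'a set \<Rightarrow> ('a \<Rightarrow> 'a \<Rightarrow> 'a) \<Rightarrow> 'a \<Rightarrow> 'a set \<Rightarrow> bool" where
  "is_filter E m z \<xi> \<longleftrightarrow> \<xi> \<subseteq> E \<and> \<xi> \<noteq> {} \<and> z \<notin> \<xi>
     \<and> (\<forall>e\<in>\<xi>. \<forall>f\<in>\<xi>. m e f \<in> \<xi>)
     \<and> (\<forall>e\<in>\<xi>. \<forall>f\<in>E. sl_le m e f \<longrightarrow> f \<in> \<xi>)"

definition is_ultrafilter :: "'a set \<Rightarrow> ('a \<Rightarrow> 'a \<Rightarrow> 'a) \<Rightarrow> 'a \<Rightarrow> 'a set \<Rightarrow> bool" where
  "is_ultrafilter E m z \<xi> \<longleftrightarrow> is_filter E m z \<xi>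
     \<and> (\<forall>\<eta>. is_filter E m z \<eta> \<and> \<xi> \<subseteq> \<eta> \<longrightarrow> \<eta> = \<xi>)"

definition E_XY :: "'a set \<Rightarrow> ('a \<Rightarrow> 'a \<Rightarrow> 'a) \<Rightarrow> 'a \<Rightarrow> 'a set \<Rightarrow> 'a set \<Rightarrow> 'a set" where
  "E_XY E m z X Y = {e \<in> E. (\<forall>x\<in>X. sl_le m e x) \<and> (\<forall>y\<in>Y. m e y = z)}"

definition is_cover :: "'a set \<Rightarrow> ('a \<Rightarrow> 'a \<Rightarrow> 'a) \<Rightarrow> 'a \<Rightarrow> 'a set \<Rightarrow> 'a set \<Rightarrow> 'a set \<Rightarrow> bool" where
  "is_cover E m z X Y Z \<longleftrightarrow> finite Z \<and> Z \<subseteq> E_XY E m z X Y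
     \<and> (\<forall>e\<in>E_XY E m z X Y. e \<noteq> z \<longrightarrow> (\<exists>\<zeta>\<in>Z. m e \<zeta> \<noteq> z))"

definition is_tight_filter :: "'a set \<Rightarrow> ('a \<Rightarrow> 'a \<Rightarrow> 'a) \<Rightarrow> 'a \<Rightarrow> 'a set \<Rightarrow> bool" where
  "is_tight_filter E m z \<xi> \<longleftrightarrow> is_filter E m z \<xi>
     \<and> (\<forall>X Y Z. finite X \<and> finite Y \<and> X \<subseteq> E \<and> Y \<subseteq> E \<and> X \<subseteq> \<xi> \<and> Y \<inter> \<xi> = {}
            \<and> is_cover E m z X Y Z \<longrightarrow> Z \<inter> \<xi> \<noteq> {})"

end

theory Submission
  imports Defs
begin

text \<open>The nonzero idempotents are the (alpha,1,alpha), and (alpha,1,alpha) is below (beta,1,beta)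
  exactly when beta is a prefix of alpha. Hence a filter is a chain of finite paths closed under
  prefixes, and what matters is whether it contains arbitrarily long paths. If it does, it is the
  set of prefixes of an infinite path: it is maximal, since a larger filter could only contain
  prefixes of its members, and it is tight, since for a member alpha longer than every element of
  X, Y and Z the idempotent (alpha,1,alpha) lies in E^{X,Y} and can only meet elements of Z that
  are prefixes of alpha. Conversely, both tight filters and ultrafilters contain arbitrarily long
  paths: with alpha, a tight filter contains some one-edge extension of alpha, because these
  finitely many extensions cover the idempotents below (alpha,1,alpha); and an ultrafilter with a
  longest member alpha would be properly contained in the filter of prefixes of a one-edge
  extension of alpha.\<close>

definition path_prefix :: "('v,'e) fpath \<Rightarrow> ('v,'e) fpath \<Rightarrow> bool" where
  "path_prefix \<beta> \<alpha> \<longleftrightarrow> fst \<beta> = fst \<alpha> \<and> prefix (snd \<beta>) (snd \<alpha>)"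

lemma path_prefix_refl: "path_prefix \<alpha> \<alpha>"
  by (simp add: path_prefix_def)

lemma path_prefix_trans: "path_prefix \<gamma> \<beta> \<Longrightarrow> path_prefix \<beta> \<alpha> \<Longrightarrow> path_prefix \<gamma> \<alpha>"
  unfolding path_prefix_def by (auto intro: prefix_order.trans)

lemma path_prefix_antisym: "path_prefix \<beta> \<alpha> \<Longrightarrow> path_prefix \<alpha> \<beta> \<Longrightarrow> \<beta> = \<alpha>"
  unfolding path_prefix_def by (auto simp: prod_eq_iff intro: prefix_order.antisym)

lemma path_prefix_same_cases:
  "path_prefix \<beta> \<alpha> \<Longrightarrow> path_prefix \<gamma> \<alpha> \<Longrightarrow> path_prefix \<beta> \<gamma> \<or> path_prefix \<gamma> \<beta>"
  unfolding path_prefix_def using prefix_same_cases by metis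

lemma path_prefix_length_ge_imp_eq:
  "path_prefix \<beta> \<alpha> \<Longrightarrow> length (snd \<alpha>) \<le> length (snd \<beta>) \<Longrightarrow> \<beta> = \<alpha>"
  unfolding path_prefix_def prefix_def by (auto simp: prod_eq_iff)

definition path_snoc :: "('v,'e) fpath \<Rightarrow> 'e \<Rightarrow> ('v,'e) fpath" where
  "path_snoc \<alpha> e = (fst \<alpha>, snd \<alpha> @ [e])"

lemma length_path_snoc [simp]: "length (snd (path_snoc \<alpha> e)) = Suc (length (snd \<alpha>))"
  by (simp add: path_snoc_def)

lemma path_prefix_path_snoc: "path_prefix \<alpha> (path_snoc \<alpha> e)"
  by (simp add: path_prefix_def path_snoc_def)

lemma composable_appendD: "composable r s (xs @ ys) \<Longrightarrow> composable r s xs"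
  by (induction r s xs rule: composable.induct) auto

lemma composable_append_Cons: "composable r s (xs @ b # ys) \<Longrightarrow> xs \<noteq> [] \<Longrightarrow> s (last xs) = r b"
  by (induction r s xs rule: composable.induct) auto

lemma composable_snoc:
  "composable r s xs \<Longrightarrow> xs \<noteq> [] \<Longrightarrow> s (last xs) = r b \<Longrightarrow> composable r s (xs @ [b])"
  by (induction r s xs rule: composable.induct) auto

lemma is_path_prefix: "is_path r s \<alpha> \<Longrightarrow> path_prefix \<beta> \<alpha> \<Longrightarrow> is_path r s \<beta>"
  unfolding is_path_def path_prefix_def prefix_def
  by (cases "snd \<beta> = []") (auto dest: composable_appendD)

lemma is_path_path_snoc: "is_path r s \<alpha> \<Longrightarrow> r e = src_path s \<alpha> \<Longrightarrow> is_path r s (path_snoc \<alpha> e)"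
  unfolding is_path_def path_snoc_def src_path_def
  by (cases "snd \<alpha> = []") (auto intro: composable_snoc)

lemma path_prefix_extends_by_edge:
  assumes "is_path r s \<beta>" "path_prefix \<alpha> \<beta>" "length (snd \<alpha>) < length (snd \<beta>)"
  obtains b where "r b = src_path s \<alpha>" "path_prefix (path_snoc \<alpha> b) \<beta>"
proof -
  from assms(2,3) obtain b ys where \<beta>: "snd \<beta> = snd \<alpha> @ b # ys" "fst \<alpha> = fst \<beta>"
    unfolding path_prefix_def prefix_def by (auto simp: neq_Nil_conv)
  have "r b = src_path s \<alpha>"
    using assms(1) \<beta> composable_append_Cons[of r s "snd \<alpha>" b ys]
    by (cases "snd \<alpha> = []") (simp_all add: is_path_def src_path_def)
  moreover have "path_prefix (path_snoc \<alpha> b) \<beta>"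
    using \<beta> by (simp add: path_prefix_def path_snoc_def)
  ultimately show ?thesis by (rule that)
qed

lemma act_edges_eq_Nil_iff [simp]: "act_edges aE \<phi> g l = [] \<longleftrightarrow> l = []"
  by (cases l) auto

locale sge_semilattice =
  fixes G :: "'g monoid" (structure) and r s :: "'e \<Rightarrow> 'v" and aV :: "'g \<Rightarrow> 'v \<Rightarrow> 'v"
    and aE :: "'g \<Rightarrow> 'e \<Rightarrow> 'e" and \<phi> :: "'g \<Rightarrow> 'e \<Rightarrow> 'g"
  assumes is_group: "group G"
    and aV_one: "aV \<one> = id" and aE_one: "aE \<one> = id" and \<phi>_one: "\<And>a. \<phi> \<one> a = \<one>"
begin

abbreviation mult where "mult \<equiv> S_mult G aE \<phi>"
abbreviation ES where "ES \<equiv> idempotents (S_GE G r s aV) mult"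
abbreviation idem :: "('v,'e) fpath \<Rightarrow> ('v,'e,'g) sge" where "idem \<alpha> \<equiv> STr \<alpha> \<one> \<alpha>"

lemma cocycle_edges_one [simp]: "cocycle_edges \<phi> \<one> l = \<one>"
  by (induction l) (simp_all add: \<phi>_one)

lemma act_edges_one [simp]: "act_edges aE \<phi> \<one> l = l"
  by (induction l) (simp_all add: \<phi>_one aE_one)

lemma S_mult_SZero [simp]: "mult SZero x = SZero" "mult x SZero = SZero"
  by (auto simp: S_mult_def split: sge.split)

lemma S_mult_idem:
  "mult (idem \<alpha>) (idem \<beta>) =
     (if path_prefix \<beta> \<alpha> then idem \<alpha> else if path_prefix \<alpha> \<beta> then idem \<beta> else SZero)"
proof -
  interpret group G by (rule is_group)
  show ?thesis
    unfolding S_mult_def path_prefix_def by (auto simp: Let_def prefix_def prod_eq_iff)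
qed

lemma S_mult_idem_neq_SZero:
  "mult (idem \<alpha>) (idem \<beta>) \<noteq> SZero \<longleftrightarrow> path_prefix \<beta> \<alpha> \<or> path_prefix \<alpha> \<beta>"
  by (simp add: S_mult_idem)

lemma sl_le_idem_iff: "sl_le mult (idem \<alpha>) (idem \<beta>) \<longleftrightarrow> path_prefix \<beta> \<alpha>"
  unfolding sl_le_def S_mult_idem by (auto dest: path_prefix_antisym)

lemma idempotent_STr_imp:
  assumes "g \<in> carrier G" "mult (STr \<alpha> g \<beta>) (STr \<alpha> g \<beta>) = STr \<alpha> g \<beta>"
  shows "\<alpha> = \<beta> \<and> g = \<one>"
proof -
  interpret group G by (rule is_group)
  show ?thesis
    using assms unfolding S_mult_def
    by (auto simp: Let_def prefix_def prod_eq_iff split: if_splits)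
qed

lemma idempotents_iff: "x \<in> ES \<longleftrightarrow> x = SZero \<or> (\<exists>\<alpha>. is_path r s \<alpha> \<and> x = idem \<alpha>)"
proof -
  interpret group G by (rule is_group)
  show ?thesis
    by (cases x)
      (auto simp: idempotents_def S_GE_def aV_one S_mult_idem path_prefix_refl
        dest: idempotent_STr_imp)
qed

lemma idem_in_idempotents_iff [simp]: "idem \<alpha> \<in> ES \<longleftrightarrow> is_path r s \<alpha>"
  by (simp add: idempotents_iff del: split_paired_Ex)

lemma filter_memE:
  assumes "is_filter ES mult SZero \<xi>" "x \<in> \<xi>"
  obtains \<alpha> where "is_path r s \<alpha>" "x = idem \<alpha>"
  using assms idempotents_iff[of x] unfolding is_filter_def by blast

lemma filter_has_idem:
  assumes "is_filter ES mult SZero \<xi>"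
  obtains \<alpha> where "idem \<alpha> \<in> \<xi>"
proof -
  obtain x where "x \<in> \<xi>" using assms unfolding is_filter_def by blast
  then show ?thesis using assms that by (auto elim: filter_memE)
qed

lemma filter_idem_is_path: "is_filter ES mult SZero \<xi> \<Longrightarrow> idem \<alpha> \<in> \<xi> \<Longrightarrow> is_path r s \<alpha>"
  unfolding is_filter_def by auto

lemma filter_comparable:
  assumes "is_filter ES mult SZero \<xi>" "idem \<alpha> \<in> \<xi>" "idem \<beta> \<in> \<xi>"
  shows "path_prefix \<alpha> \<beta> \<or> path_prefix \<beta> \<alpha>"
proof -
  have "mult (idem \<alpha>) (idem \<beta>) \<in> \<xi>" "SZero \<notin> \<xi>"
    using assms unfolding is_filter_def by blast+
  then show ?thesis using S_mult_idem_neq_SZero by fastforce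
qed

lemma filter_prefix_closed:
  assumes "is_filter ES mult SZero \<xi>" "idem \<alpha> \<in> \<xi>" "path_prefix \<beta> \<alpha>"
  shows "idem \<beta> \<in> \<xi>"
proof -
  have "idem \<beta> \<in> ES" using is_path_prefix[OF filter_idem_is_path[OF assms(1,2)] assms(3)] by simp
  then show ?thesis using assms sl_le_idem_iff unfolding is_filter_def by blast
qed

lemma filter_shorter_is_prefix:
  assumes "is_filter ES mult SZero \<xi>" "idem \<alpha> \<in> \<xi>" "idem \<beta> \<in> \<xi>"
    and "length (snd \<beta>) \<le> length (snd \<alpha>)"
  shows "path_prefix \<beta> \<alpha>"
  using filter_comparable[OF assms(1-3)] path_prefix_length_ge_imp_eq[of \<alpha> \<beta>] assms(4)
    path_prefix_refl by auto

lemma filter_mem_if_meets_shorter: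
  assumes "is_filter ES mult SZero \<xi>" "idem \<alpha> \<in> \<xi>" "mult (idem \<alpha>) (idem \<gamma>) \<noteq> SZero"
    and "length (snd \<gamma>) \<le> length (snd \<alpha>)"
  shows "idem \<gamma> \<in> \<xi>"
proof -
  have "path_prefix \<gamma> \<alpha> \<or> path_prefix \<alpha> \<gamma>" using assms(3) S_mult_idem_neq_SZero by blast
  then have "path_prefix \<gamma> \<alpha>" using assms(4) path_prefix_length_ge_imp_eq path_prefix_refl by metis
  then show ?thesis by (rule filter_prefix_closed[OF assms(1,2)])
qed

definition prefix_filter :: "('v,'e) fpath \<Rightarrow> ('v,'e,'g) sge set" where
  "prefix_filter \<alpha> = {idem \<beta> | \<beta>. path_prefix \<beta> \<alpha>}"

lemma idem_in_prefix_filter: "idem \<alpha> \<in> prefix_filter \<alpha>"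
  using path_prefix_refl unfolding prefix_filter_def by blast

lemma is_filter_prefix_filter:
  assumes "is_path r s \<alpha>"
  shows "is_filter ES mult SZero (prefix_filter \<alpha>)"
  unfolding is_filter_def
proof (intro conjI ballI impI)
  show "prefix_filter \<alpha> \<subseteq> ES"
  proof
    fix x assume "x \<in> prefix_filter \<alpha>"
    then obtain \<beta> where "x = idem \<beta>" "path_prefix \<beta> \<alpha>" by (auto simp: prefix_filter_def)
    then show "x \<in> ES" using is_path_prefix[OF assms] by simp
  qed
  show "prefix_filter \<alpha> \<noteq> {}" "SZero \<notin> prefix_filter \<alpha>"
    using idem_in_prefix_filter[of \<alpha>] unfolding prefix_filter_def by blast+
next
  fix x y assume "x \<in> prefix_filter \<alpha>" "y \<in> prefix_filter \<alpha>"
  then show "mult x y \<in> prefix_filter \<alpha>"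
    unfolding prefix_filter_def by (auto simp: S_mult_idem dest: path_prefix_same_cases)
next
  fix x f assume x: "x \<in> prefix_filter \<alpha>" and f: "f \<in> ES" and le: "sl_le mult x f"
  obtain \<beta> where \<beta>: "x = idem \<beta>" "path_prefix \<beta> \<alpha>"
    using x unfolding prefix_filter_def by blast
  have "f \<noteq> SZero" using le \<beta>(1) by (auto simp: sl_le_def)
  then obtain \<delta> where \<delta>: "f = idem \<delta>" using f idempotents_iff by blast
  then have "path_prefix \<delta> \<beta>" using le \<beta>(1) sl_le_idem_iff by simp
  then show "f \<in> prefix_filter \<alpha>"
    using \<beta>(2) \<delta> path_prefix_trans unfolding prefix_filter_def by blast
qed

lemma prefix_filter_mono: "path_prefix \<alpha> \<beta> \<Longrightarrow> prefix_filter \<alpha> \<subseteq> prefix_filter \<beta>"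
  unfolding prefix_filter_def using path_prefix_trans by blast

lemma filter_subset_prefix_filter_longest:
  assumes F: "is_filter ES mult SZero \<xi>" and \<alpha>: "idem \<alpha> \<in> \<xi>"
    and longest: "\<And>\<beta>. idem \<beta> \<in> \<xi> \<Longrightarrow> length (snd \<beta>) \<le> length (snd \<alpha>)"
  shows "\<xi> \<subseteq> prefix_filter \<alpha>"
proof
  fix x assume "x \<in> \<xi>"
  then obtain \<beta> where \<beta>: "x = idem \<beta>" using F filter_memE by blast
  then have "path_prefix \<beta> \<alpha>"
    using filter_shorter_is_prefix[OF F \<alpha>, of \<beta>] longest[of \<beta>] \<open>x \<in> \<xi>\<close> by simp
  then show "x \<in> prefix_filter \<alpha>" using \<beta> unfolding prefix_filter_def by blast
qed

definition has_long_paths :: "('v,'e,'g) sge set \<Rightarrow> bool" where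
  "has_long_paths \<xi> \<longleftrightarrow> (\<forall>n. \<exists>\<alpha>. idem \<alpha> \<in> \<xi> \<and> n \<le> length (snd \<alpha>))"

lemma ultrafilter_if_has_long_paths:
  assumes F: "is_filter ES mult SZero \<xi>" and long: "has_long_paths \<xi>"
  shows "is_ultrafilter ES mult SZero \<xi>"
  unfolding is_ultrafilter_def
proof (intro conjI allI impI F)
  fix \<eta> assume \<eta>: "is_filter ES mult SZero \<eta> \<and> \<xi> \<subseteq> \<eta>"
  have "x \<in> \<xi>" if "x \<in> \<eta>" for x
  proof -
    obtain \<beta> where \<beta>: "x = idem \<beta>" using \<eta> \<open>x \<in> \<eta>\<close> by (auto elim: filter_memE)
    obtain \<alpha> where \<alpha>: "idem \<alpha> \<in> \<xi>" "length (snd \<beta>) \<le> length (snd \<alpha>)"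
      using long unfolding has_long_paths_def by blast
    then have "path_prefix \<beta> \<alpha>"
      using \<eta> \<beta> \<open>x \<in> \<eta>\<close> filter_shorter_is_prefix by blast
    then show "x \<in> \<xi>" using F \<alpha>(1) \<beta> filter_prefix_closed by blast
  qed
  then show "\<eta> = \<xi>" using \<eta> by blast
qed

lemma finite_idem_lengths_bounded:
  assumes "finite A"
  obtains n where "\<And>\<beta>. idem \<beta> \<in> A \<Longrightarrow> length (snd \<beta>) < n"
proof -
  have "inj idem" by (rule injI) simp
  then have "finite ((\<lambda>\<beta>. length (snd \<beta>)) ` (idem -` A))"
    using assms by (simp add: finite_vimageI)
  then obtain n where "(\<lambda>\<beta>. length (snd \<beta>)) ` (idem -` A) \<subseteq> {..<n}"
    using finite_nat_bounded by blast
  then show ?thesis using that by blast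
qed

lemma tight_filter_if_has_long_paths:
  assumes F: "is_filter ES mult SZero \<xi>" and long: "has_long_paths \<xi>"
  shows "is_tight_filter ES mult SZero \<xi>"
  unfolding is_tight_filter_def
proof (intro conjI allI impI F)
  fix X Y Z
  assume H: "finite X \<and> finite Y \<and> X \<subseteq> ES \<and> Y \<subseteq> ES \<and> X \<subseteq> \<xi> \<and> Y \<inter> \<xi> = {}
    \<and> is_cover ES mult SZero X Y Z"
  then obtain n where n: "\<And>\<beta>. idem \<beta> \<in> X \<union> Y \<union> Z \<Longrightarrow> length (snd \<beta>) < n"
    using finite_idem_lengths_bounded[of "X \<union> Y \<union> Z"] unfolding is_cover_def by blast
  obtain \<alpha> where \<alpha>: "idem \<alpha> \<in> \<xi>" "n \<le> length (snd \<alpha>)"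
    using long unfolding has_long_paths_def by blast
  have meets_imp_mem: "z \<in> \<xi>"
    if z: "z \<in> X \<union> Y \<union> Z" "z \<in> ES" "mult (idem \<alpha>) z \<noteq> SZero" for z
  proof -
    obtain \<gamma> where \<gamma>: "z = idem \<gamma>" using z(2,3) idempotents_iff by auto
    then show ?thesis
      using filter_mem_if_meets_shorter[OF F \<alpha>(1), of \<gamma>] n[of \<gamma>] \<alpha>(2) z(1,3) by simp
  qed
  have "idem \<alpha> \<in> E_XY ES mult SZero X Y"
    unfolding E_XY_def
  proof (intro CollectI conjI ballI)
    show "idem \<alpha> \<in> ES" using F \<alpha>(1) filter_idem_is_path by simp
  next
    fix x assume "x \<in> X"
    then have "x \<in> \<xi>" using H by blast
    then obtain \<beta> where \<beta>: "x = idem \<beta>" "idem \<beta> \<in> \<xi>" using F by (auto elim: filter_memE)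
    then have "path_prefix \<beta> \<alpha>"
      using F \<alpha> n[of \<beta>] \<open>x \<in> X\<close> filter_shorter_is_prefix by fastforce
    then show "sl_le mult (idem \<alpha>) x" using \<beta>(1) sl_le_idem_iff by blast
  next
    fix y assume "y \<in> Y"
    then show "mult (idem \<alpha>) y = SZero" using H meets_imp_mem by blast
  qed
  moreover have cover: "is_cover ES mult SZero X Y Z" using H by blast
  ultimately obtain \<zeta> where \<zeta>: "\<zeta> \<in> Z" "mult (idem \<alpha>) \<zeta> \<noteq> SZero"
    unfolding is_cover_def by blast
  moreover have "\<zeta> \<in> ES" using cover \<zeta>(1) unfolding is_cover_def E_XY_def by blast
  ultimately have "\<zeta> \<in> \<xi>" using meets_imp_mem by blast
  then show "Z \<inter> \<xi> \<noteq> {}" using \<zeta>(1) by blast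
qed

end

locale sge_row_finite_no_sources = sge_semilattice +
  assumes row_finite: "\<And>x. finite {e. r e = x}" and no_sources: "\<And>x. {e. r e = x} \<noteq> {}"
begin

lemma is_cover_path_snocs:
  assumes \<alpha>: "is_path r s \<alpha>"
  shows "is_cover ES mult SZero {idem \<alpha>} {} ((\<lambda>e. idem (path_snoc \<alpha> e)) ` {e. r e = src_path s \<alpha>})"
  unfolding is_cover_def
proof (intro conjI ballI impI)
  show "finite ((\<lambda>e. idem (path_snoc \<alpha> e)) ` {e. r e = src_path s \<alpha>})"
    using row_finite by simp
  have "idem (path_snoc \<alpha> e) \<in> E_XY ES mult SZero {idem \<alpha>} {}" if "r e = src_path s \<alpha>" for e
  proof -
    have "idem (path_snoc \<alpha> e) \<in> ES" using is_path_path_snoc[OF \<alpha> that] by simp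
    then show ?thesis using path_prefix_path_snoc by (simp add: E_XY_def sl_le_idem_iff)
  qed
  then show "(\<lambda>e. idem (path_snoc \<alpha> e)) ` {e. r e = src_path s \<alpha>} \<subseteq> E_XY ES mult SZero {idem \<alpha>} {}"
    by blast
next
  fix x assume x: "x \<in> E_XY ES mult SZero {idem \<alpha>} {}" "x \<noteq> SZero"
  then obtain \<beta> where \<beta>: "is_path r s \<beta>" "x = idem \<beta>"
    unfolding E_XY_def idempotents_iff by blast
  then have "path_prefix \<alpha> \<beta>" using x(1) sl_le_idem_iff unfolding E_XY_def by simp
  obtain b where b: "r b = src_path s \<alpha>"
    and "path_prefix (path_snoc \<alpha> b) \<beta> \<or> path_prefix \<beta> (path_snoc \<alpha> b)"
  proof (cases "length (snd \<alpha>) < length (snd \<beta>)")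
    case True
    obtain c where "r c = src_path s \<alpha>" "path_prefix (path_snoc \<alpha> c) \<beta>"
      by (rule path_prefix_extends_by_edge[OF \<beta>(1) \<open>path_prefix \<alpha> \<beta>\<close> True])
    then show ?thesis using that by blast
  next
    case False
    then have "\<beta> = \<alpha>" using \<open>path_prefix \<alpha> \<beta>\<close> path_prefix_length_ge_imp_eq by fastforce
    moreover obtain b where "r b = src_path s \<alpha>" using no_sources[of "src_path s \<alpha>"] by auto
    ultimately show ?thesis using that[of b] path_prefix_path_snoc[of \<alpha> b] by simp
  qed
  then show "\<exists>\<zeta>\<in>(\<lambda>e. idem (path_snoc \<alpha> e)) ` {e. r e = src_path s \<alpha>}. mult x \<zeta> \<noteq> SZero"
    using \<beta>(2) S_mult_idem_neq_SZero by blast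
qed

lemma tight_filter_path_snoc:
  assumes T: "is_tight_filter ES mult SZero \<xi>" and \<alpha>: "idem \<alpha> \<in> \<xi>"
  obtains e where "idem (path_snoc \<alpha> e) \<in> \<xi>"
proof -
  have F: "is_filter ES mult SZero \<xi>" using T by (simp add: is_tight_filter_def)
  have \<alpha>_path: "is_path r s \<alpha>" by (rule filter_idem_is_path[OF F \<alpha>])
  have tight: "\<And>X Y Z. finite X \<Longrightarrow> finite Y \<Longrightarrow> X \<subseteq> ES \<Longrightarrow> Y \<subseteq> ES \<Longrightarrow> X \<subseteq> \<xi> \<Longrightarrow>
      Y \<inter> \<xi> = {} \<Longrightarrow> is_cover ES mult SZero X Y Z \<Longrightarrow> Z \<inter> \<xi> \<noteq> {}"
    using T unfolding is_tight_filter_def by blast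
  have "(\<lambda>e. idem (path_snoc \<alpha> e)) ` {e. r e = src_path s \<alpha>} \<inter> \<xi> \<noteq> {}"
    using tight[OF _ _ _ _ _ _ is_cover_path_snocs[OF \<alpha>_path]] \<alpha> \<alpha>_path by simp
  then show ?thesis using that by blast
qed

lemma tight_filter_has_long_paths:
  assumes T: "is_tight_filter ES mult SZero \<xi>"
  shows "has_long_paths \<xi>"
  unfolding has_long_paths_def
proof
  fix n show "\<exists>\<alpha>. idem \<alpha> \<in> \<xi> \<and> n \<le> length (snd \<alpha>)"
  proof (induction n)
    case 0
    have "is_filter ES mult SZero \<xi>" using T by (simp add: is_tight_filter_def)
    then obtain \<alpha> where "idem \<alpha> \<in> \<xi>" by (rule filter_has_idem)
    then show ?case by (intro exI[of _ \<alpha>]) simp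
  next
    case (Suc n)
    then obtain \<alpha> where "idem \<alpha> \<in> \<xi>" "n \<le> length (snd \<alpha>)" by blast
    moreover obtain e where "idem (path_snoc \<alpha> e) \<in> \<xi>"
      using tight_filter_path_snoc[OF T \<open>idem \<alpha> \<in> \<xi>\<close>] by blast
    ultimately show ?case by (intro exI[of _ "path_snoc \<alpha> e"]) simp
  qed
qed

lemma ultrafilter_has_long_paths:
  assumes U: "is_ultrafilter ES mult SZero \<xi>"
  shows "has_long_paths \<xi>"
proof (rule ccontr)
  have F: "is_filter ES mult SZero \<xi>" using U by (simp add: is_ultrafilter_def)
  assume "\<not> has_long_paths \<xi>"
  then obtain n where bound: "\<And>\<alpha>. idem \<alpha> \<in> \<xi> \<Longrightarrow> length (snd \<alpha>) < n"
    unfolding has_long_paths_def by (meson not_le)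
  obtain \<alpha>\<^sub>0 where "idem \<alpha>\<^sub>0 \<in> \<xi>" using F by (rule filter_has_idem)
  then obtain \<alpha> where \<alpha>: "idem \<alpha> \<in> \<xi>"
    and longest: "\<And>\<beta>. idem \<beta> \<in> \<xi> \<Longrightarrow> length (snd \<beta>) \<le> length (snd \<alpha>)"
    using Lattices_Big.ex_has_greatest_nat[of "\<lambda>\<beta>. idem \<beta> \<in> \<xi>" \<alpha>\<^sub>0 "\<lambda>\<beta>. length (snd \<beta>)" n]
      bound
    by blast
  obtain e where "r e = src_path s \<alpha>" using no_sources[of "src_path s \<alpha>"] by auto
  then have "is_path r s (path_snoc \<alpha> e)"
    by (rule is_path_path_snoc[OF filter_idem_is_path[OF F \<alpha>]])
  then have "is_filter ES mult SZero (prefix_filter (path_snoc \<alpha> e))"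
    by (rule is_filter_prefix_filter)
  moreover have "\<xi> \<subseteq> prefix_filter (path_snoc \<alpha> e)"
    using filter_subset_prefix_filter_longest[OF F \<alpha> longest]
      prefix_filter_mono[OF path_prefix_path_snoc] by blast
  ultimately have "prefix_filter (path_snoc \<alpha> e) = \<xi>" using U unfolding is_ultrafilter_def by blast
  then show False
    using idem_in_prefix_filter[of "path_snoc \<alpha> e"] longest[of "path_snoc \<alpha> e"] by simp
qed

lemma tight_filter_iff_ultrafilter:
  "is_tight_filter ES mult SZero \<xi> \<longleftrightarrow> is_ultrafilter ES mult SZero \<xi>"
proof
  assume T: "is_tight_filter ES mult SZero \<xi>"
  then have "is_filter ES mult SZero \<xi>" by (simp add: is_tight_filter_def)
  then show "is_ultrafilter ES mult SZero \<xi>"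
    using tight_filter_has_long_paths[OF T] by (rule ultrafilter_if_has_long_paths)
next
  assume U: "is_ultrafilter ES mult SZero \<xi>"
  then have "is_filter ES mult SZero \<xi>" by (simp add: is_ultrafilter_def)
  then show "is_tight_filter ES mult SZero \<xi>"
    using ultrafilter_has_long_paths[OF U] by (rule tight_filter_if_has_long_paths)
qed

end

theorem proposition4p1:
  fixes G :: "'g monoid"
    and r s :: "'e \<Rightarrow> 'v"
    and aV :: "'g \<Rightarrow> 'v \<Rightarrow> 'v"
    and aE :: "'g \<Rightarrow> 'e \<Rightarrow> 'e"
    and \<phi> :: "'g \<Rightarrow> 'e \<Rightarrow> 'g"
  assumes countV: "countable (UNIV :: 'v set)"
    and countE: "countable (UNIV :: 'e set)"
    and row_finite: "\<forall>x. finite {e. r e = x}"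
    and no_sources: "\<forall>x. {e. r e = x} \<noteq> {}"
    and grp: "group G"
    and actV_one: "aV \<one>\<^bsub>G\<^esub> = id"
    and actE_one: "aE \<one>\<^bsub>G\<^esub> = id"
    and actV_mult: "\<forall>g\<in>carrier G. \<forall>h\<in>carrier G. aV (g \<otimes>\<^bsub>G\<^esub> h) = aV g \<circ> aV h"
    and actE_mult: "\<forall>g\<in>carrier G. \<forall>h\<in>carrier G. aE (g \<otimes>\<^bsub>G\<^esub> h) = aE g \<circ> aE h"
    and auto_bij: "\<forall>g\<in>carrier G. bij (aV g) \<and> bij (aE g)"
    and auto_r: "\<forall>g\<in>carrier G. \<forall>e. r (aE g e) = aV g (r e)"
    and auto_s: "\<forall>g\<in>carrier G. \<forall>e. s (aE g e) = aV g (s e)"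
    and cocycle_closed: "\<forall>g\<in>carrier G. \<forall>a. \<phi> g a \<in> carrier G"
    and cocycle: "\<forall>g\<in>carrier G. \<forall>h\<in>carrier G. \<forall>a.
                    \<phi> (g \<otimes>\<^bsub>G\<^esub> h) a = \<phi> g (aE h a) \<otimes>\<^bsub>G\<^esub> \<phi> h a"
    and cocycle_vertex: "\<forall>g\<in>carrier G. \<forall>a x. aV (\<phi> g a) x = aV g x"
  shows "{\<xi>. is_tight_filter (idempotents (S_GE G r s aV) (S_mult G aE \<phi>)) (S_mult G aE \<phi>) SZero \<xi>}
       = {\<xi>. is_ultrafilter (idempotents (S_GE G r s aV) (S_mult G aE \<phi>)) (S_mult G aE \<phi>) SZero \<xi>}"
proof -
  interpret group G by (rule grp)
  txt \<open>Of the hypotheses on the action and the cocycle only the identity laws enter the product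
    of idempotents (phi(1,a) = 1 follows from the cocycle identity).\<close>
  have \<phi>_one: "\<phi> \<one>\<^bsub>G\<^esub> a = \<one>\<^bsub>G\<^esub>" for a
  proof -
    have "\<phi> \<one>\<^bsub>G\<^esub> a = \<phi> \<one>\<^bsub>G\<^esub> a \<otimes>\<^bsub>G\<^esub> \<phi> \<one>\<^bsub>G\<^esub> a"
      using cocycle[rule_format, of "\<one>\<^bsub>G\<^esub>" "\<one>\<^bsub>G\<^esub>" a] actE_one by simp
    then show ?thesis using cocycle_closed by simp
  qed
  interpret sge_row_finite_no_sources G r s aV aE \<phi>
    using grp actV_one actE_one \<phi>_one row_finite no_sources by unfold_locales auto
  show ?thesis using tight_filter_iff_ultrafilter by simp
qed

end
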